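(* Let $\mathcal{B}\subseteq\{1,2\}^3$ be a basic set with associated $S_2$-SFT $X^{\mathcal{B}}$ and SNRE sequences $(a_n),(b_n)$, and let $c_n=a_n+b_n$. If the SNRE is of the cooperating type, with $c_n=c_{n-1}^2+g_{n-1}$, then $$h(X^{\mathcal{B}})=\frac14\Big[\ln c_1+\lim_{n\to\infty}\sum_{j=1}^{n-1}2^{-j}\ln\Big(1+\frac{g_j}{c_j^2}\Big)\Big].$$
   Context: $S_2$ is the free semigroup on two generators, identified with finite words over $\{1,2\}$ (root $\epsilon$). Alphabet $\mathcal{A}=\{1,2\}$; a basic set $\mathcal{B}\subseteq\mathcal{A}^3$ is a set of admissible 2-blocks $(i,i_1,i_2)$, $X^{\mathcal{B}}$ the associated $S_2$-SFT. $a_n$ (resp. $b_n$) is the number of maps $u$ from words of length $\le n$ to $\mathcal{A}$ with $(u(w),u(w1),u(w2))\in\mathcal{B}$ for all words $w$ of length $\le n-1$ and $u(\epsilon)=1$ (resp. $2$); equivalently $a_0=b_0=1$, $a_n=F^{(a)}(a_{n-1},b_{n-1})$, $b_n=F^{(b)}(a_{n-1},b_{n-1})$ with $F^{(a)}(x,y)=\sum_{(1,i,j)\in\mathcal{B}}z_iz_j$, $F^{(b)}(x,y)=\sum_{(2,i,j)\in\mathcal{B}}z_iz_j$, $z_1=x,z_2=y$. Entropy: $h(X^{\mathcal{B}})=\limsup_{n}\frac{\ln(a_n+b_n)}{2^{n+1}-1}$ (known to be a limit). The SNRE is of cooperating type if $c_n=c_{n-1}^2+g_{n-1}$ for all $n\ge2$,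 where $g_{m}=G(a_m,b_m)$ for a polynomial $G$ with nonnegative integer coefficients, and $g_m\le c_m^2$ for all $m$. *)

theory Defs
  imports "HOL-Analysis.Analysis"
begin

text \<open>Alphabet {1,2} encoded as the natural numbers 1 and 2; a 2-block (i,i1,i2) is a triple.\<close>

type_synonym block = "nat \<times> nat \<times> nat"

definition basic_set :: "block set \<Rightarrow> bool" where
  "basic_set B \<longleftrightarrow> B \<subseteq> {1,2} \<times> {1,2} \<times> {1,2}"

definition snre_F :: "block set \<Rightarrow> nat \<Rightarrow> nat \<Rightarrow> nat \<Rightarrow> nat" where
  "snre_F B k x y =
     (\<Sum>(i,j)\<in>{(i,j). (k,i,j) \<in> B}.
        (if i = 1 then x else y) * (if j = 1 then x else y))"

fun snre :: "block set \<Rightarrow> nat \<Rightarrow> nat \<times> nat" where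
  "snre B 0 = (1, 1)"
| "snre B (Suc n) =
     (snre_F B 1 (fst (snre B n)) (snd (snre B n))
    , snre_F B 2 (fst (snre B n)) (snd (snre B n)))"

definition snre_a :: "block set \<Rightarrow> nat \<Rightarrow> nat" where
  "snre_a B n = fst (snre B n)"

definition snre_b :: "block set \<Rightarrow> nat \<Rightarrow> nat" where
  "snre_b B n = snd (snre B n)"

definition snre_c :: "block set \<Rightarrow> nat \<Rightarrow> nat" where
  "snre_c B n = snre_a B n + snre_b B n"

definition sft_entropy :: "block set \<Rightarrow> ereal" where
  "sft_entropy B = limsup (\<lambda>n. ereal (ln (real (snre_c B n)) / (2 ^ (n + 1) - 1)))"

text \<open>A bivariate polynomial with nonnegative integer coefficients is given by a
  finitely supported coefficient function on exponent pairs (i,j).\<close>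
definition poly2_eval :: "(nat \<times> nat \<Rightarrow> nat) \<Rightarrow> nat \<Rightarrow> nat \<Rightarrow> nat" where
  "poly2_eval G x y = (\<Sum>(i,j)\<in>{p. G p \<noteq> 0}. G (i,j) * x ^ i * y ^ j)"

definition cooperating_with :: "block set \<Rightarrow> (nat \<times> nat \<Rightarrow> nat) \<Rightarrow> bool" where
  "cooperating_with B G \<longleftrightarrow>
     finite {p. G p \<noteq> 0} \<and>
     (\<forall>n\<ge>2. snre_c B n = (snre_c B (n - 1))\<^sup>2 + poly2_eval G (snre_a B (n - 1)) (snre_b B (n - 1))) \<and>
     (\<forall>m. poly2_eval G (snre_a B m) (snre_b B m) \<le> (snre_c B m)\<^sup>2)"

end

theory Submission
  imports Defs
begin

text \<open>Writing c(n+1) = c(n)^2 (1 + g(n) / c(n)^2) and taking logarithms gives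
  ln c(n) = 2^(n-1) (ln c(1) + \<Sum>j=1..n-1. 2^-j ln (1 + g(j) / c(j)^2)).
  Since g(j) \<le> c(j)^2 the series is dominated by \<Sum> 2^-j ln 2, and 2^(n-1) / (2^(n+1) - 1)
  tends to 1/4, so ln c(n) / (2^(n+1) - 1) converges; its limit is then the limsup
  defining the entropy.\<close>

lemma two_power_ratio_tendsto: "(\<lambda>n. 2 ^ (n - 1) / (2 ^ (n + 1) - 1 :: real)) \<longlonglongrightarrow> 1/4"
proof -
  have "(\<lambda>n. 1 / (4 - 2 * (1/2::real) ^ n)) \<longlonglongrightarrow> 1 / (4 - 2 * 0)"
    by (intro tendsto_intros) auto
  hence lim: "(\<lambda>n. 1 / (4 - 2 * (1/2::real) ^ n)) \<longlonglongrightarrow> 1/4" by simp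
  have "\<forall>\<^sub>F n in sequentially. 1 / (4 - 2 * (1/2::real) ^ n) = 2 ^ (n - 1) / (2 ^ (n + 1) - 1)"
  proof (rule eventually_sequentiallyI[of 1])
    fix n :: nat assume "1 \<le> n"
    then obtain m where m: "n = Suc m" by (cases n) auto
    have "(1/2::real) ^ Suc m = 1 / (2 * 2 ^ m)" by (simp add: power_one_over)
    moreover have "4 * 2 ^ m - 1 > (0::real)" using one_le_power[of "2::real" m] by linarith
    ultimately show "1 / (4 - 2 * (1/2::real) ^ n) = 2 ^ (n - 1) / (2 ^ (n + 1) - 1)"
      using m by (simp add: field_simps)
  qed
  thus ?thesis by (rule Lim_transform_eventually[OF lim])
qed

lemma summable_tendsto_sum_from_one:
  fixes f :: "nat \<Rightarrow> real"
  assumes "summable f"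
  shows "(\<lambda>n. \<Sum>j=1..<n. f j) \<longlonglongrightarrow> suminf f - f 0"
proof -
  have "(\<lambda>n. sum f {..<n} - f 0) \<longlonglongrightarrow> suminf f - f 0"
    by (intro tendsto_diff summable_LIMSEQ assms tendsto_const)
  moreover have "\<forall>\<^sub>F n in sequentially. sum f {..<n} - f 0 = (\<Sum>j=1..<n. f j)"
  proof (rule eventually_sequentiallyI[of 1])
    fix n :: nat assume "1 \<le> n"
    hence "sum f {0..<n} = f 0 + sum f {Suc 0..<n}"
      by (intro sum.atLeast_Suc_lessThan) simp
    thus "sum f {..<n} - f 0 = (\<Sum>j=1..<n. f j)" by (simp add: atLeast0LessThan)
  qed
  ultimately show ?thesis by (rule Lim_transform_eventually)
qed

locale cooperating_recurrence =
  fixes c g :: "nat \<Rightarrow> real"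
  assumes c1_nonneg: "0 \<le> c 1"
    and recurrence: "n \<ge> 1 \<Longrightarrow> c (Suc n) = (c n)\<^sup>2 + g n"
    and g_nonneg: "0 \<le> g n"
    and g_le_square: "g n \<le> (c n)\<^sup>2"
begin

definition defect :: "nat \<Rightarrow> real" where
  "defect j = (1/2) ^ j * ln (1 + g j / (c j)\<^sup>2)"

lemma defect_nonneg: "0 \<le> defect j"
  using g_nonneg[of j] by (simp add: defect_def)

lemma defect_le: "defect j \<le> (1/2) ^ j * ln 2"
proof -
  have "g j / (c j)\<^sup>2 \<le> 1"
    using g_le_square[of j] by (cases "c j = 0") (auto simp: divide_le_eq)
  moreover have "0 \<le> g j / (c j)\<^sup>2" using g_nonneg[of j] by simp
  ultimately have "ln (1 + g j / (c j)\<^sup>2) \<le> ln 2" by simp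
  thus ?thesis unfolding defect_def by (simp add: mult_left_mono)
qed

lemma summable_defect: "summable defect"
proof (rule summable_comparison_test')
  show "summable (\<lambda>j. (1/2::real) ^ j * ln 2)"
    by (intro summable_mult2 summable_geometric) simp
  show "norm (defect j) \<le> (1/2) ^ j * ln 2" for j
    using defect_nonneg defect_le by simp
qed

lemma c_pos:
  assumes "c 1 > 0" and "n \<ge> 1"
  shows "c n > 0"
  using assms(2)
proof (induction n rule: dec_induct)
  case (step m)
  thus ?case using recurrence[of m] g_nonneg[of m] by (simp add: add_pos_nonneg)
qed (use assms(1) in simp)

lemma c_eq_zero:
  assumes "c 1 = 0" and "n \<ge> 1"
  shows "c n = 0"
  using assms(2)
proof (induction n rule: dec_induct)
  case (step m)
  hence "g m = 0" using g_le_square[of m] g_nonneg[of m] by simp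
  thus ?case using recurrence[of m] step by simp
qed (use assms(1) in simp)

lemma ln_c_eq:
  assumes "c 1 > 0" and "n \<ge> 1"
  shows "ln (c n) = 2 ^ (n - 1) * (ln (c 1) + (\<Sum>j=1..<n. defect j))"
  using assms(2)
proof (induction n rule: dec_induct)
  case base thus ?case by simp
next
  case (step m)
  have cm: "c m > 0" using c_pos assms(1) step by simp
  have "c (Suc m) = (c m)\<^sup>2 * (1 + g m / (c m)\<^sup>2)"
    using recurrence[of m] step cm by (simp add: field_simps)
  moreover have "1 + g m / (c m)\<^sup>2 > 0" using g_nonneg[of m] cm by (simp add: add_pos_nonneg)
  ultimately have "ln (c (Suc m)) = 2 * ln (c m) + ln (1 + g m / (c m)\<^sup>2)"
    using cm by (simp add: ln_mult ln_realpow)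
  also have "\<dots> = 2 * 2 ^ (m - 1) * (ln (c 1) + (\<Sum>j=1..<m. defect j)) + 2 ^ m * defect m"
  proof -
    have "(2::real) ^ m * (1/2) ^ m = 1" by (simp flip: power_mult_distrib)
    thus ?thesis using step by (simp add: defect_def)
  qed
  also have "\<dots> = 2 ^ m * (ln (c 1) + (\<Sum>j=1..<Suc m. defect j))"
  proof -
    have "2 * 2 ^ (m - 1) = (2::real) ^ m"
      using step by (simp flip: power_Suc)
    thus ?thesis using step by (simp add: algebra_simps)
  qed
  finally show ?case by simp
qed

lemma ln_c_normalized_tendsto:
  "(\<lambda>n. ln (c n) / (2 ^ (n + 1) - 1)) \<longlonglongrightarrow> (1/4) * (ln (c 1) + (suminf defect - defect 0))"
proof (cases "c 1 = 0")
  case True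
  \<comment> \<open>Then c vanishes from 1 on, and both sides are 0 because ln 0 = 0 in Isabelle.\<close>
  have "defect j = 0" if "j \<ge> 1" for j
    using c_eq_zero[OF True that] by (simp add: defect_def)
  hence "(\<lambda>n. \<Sum>j=1..<n. defect j) = (\<lambda>_. 0)" by (intro ext sum.neutral) auto
  hence "suminf defect - defect 0 = 0"
    using LIMSEQ_unique[OF summable_tendsto_sum_from_one[OF summable_defect], of 0] by simp
  moreover have "\<forall>\<^sub>F n in sequentially. 0 = ln (c n) / (2 ^ (n + 1) - 1)"
    by (rule eventually_sequentiallyI[of 1]) (simp add: c_eq_zero[OF True])
  ultimately show ?thesis
    using True by (simp add: Lim_transform_eventually[OF tendsto_const] del: eventually_sequentially)
next
  case False
  hence c1: "c 1 > 0" using c1_nonneg by simp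
  have "(\<lambda>n. 2 ^ (n - 1) / (2 ^ (n + 1) - 1) * (ln (c 1) + (\<Sum>j=1..<n. defect j)))
          \<longlonglongrightarrow> (1/4) * (ln (c 1) + (suminf defect - defect 0))"
    by (intro tendsto_mult two_power_ratio_tendsto tendsto_add tendsto_const
        summable_tendsto_sum_from_one summable_defect)
  moreover have "\<forall>\<^sub>F n in sequentially.
      2 ^ (n - 1) / (2 ^ (n + 1) - 1) * (ln (c 1) + (\<Sum>j=1..<n. defect j)) = ln (c n) / (2 ^ (n + 1) - 1)"
  proof (rule eventually_sequentiallyI[of 1])
    fix n :: nat assume "1 \<le> n"
    from ln_c_eq[OF c1 this] show "2 ^ (n - 1) / (2 ^ (n + 1) - 1) * (ln (c 1) + (\<Sum>j=1..<n. defect j))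
        = ln (c n) / (2 ^ (n + 1) - 1)" by simp
  qed
  ultimately show ?thesis by (rule Lim_transform_eventually)
qed

end

theorem proposition4:
  fixes B :: "block set" and G :: "nat \<times> nat \<Rightarrow> nat"
  assumes "basic_set B"
    and "cooperating_with B G"
  shows "\<exists>L. (\<lambda>n. \<Sum>j=1..<n. (1/2) ^ j *
                 ln (1 + real (poly2_eval G (snre_a B j) (snre_b B j)) / (real (snre_c B j))\<^sup>2))
             \<longlonglongrightarrow> L
          \<and> sft_entropy B = ereal ((1/4) * (ln (real (snre_c B 1)) + L))"
proof -
  define c where "c n = real (snre_c B n)" for n
  define g where "g n = real (poly2_eval G (snre_a B n) (snre_b B n))" for n
  interpret cooperating_recurrence c g
  proof
    show "c (Suc n) = (c n)\<^sup>2 + g n" if "n \<ge> 1" for n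
      using assms(2) that unfolding cooperating_with_def c_def g_def by auto
    show "g n \<le> (c n)\<^sup>2" for n
      using assms(2) unfolding cooperating_with_def c_def g_def by (simp flip: of_nat_power)
  qed (simp_all add: c_def g_def)
  define L where "L = suminf defect - defect 0"
  have "sft_entropy B = ereal ((1/4) * (ln (c 1) + L))"
    unfolding sft_entropy_def L_def c_def
    by (intro lim_imp_Limsup tendsto_ereal ln_c_normalized_tendsto[unfolded c_def]) simp
  moreover have "(\<lambda>n. \<Sum>j=1..<n. defect j) \<longlonglongrightarrow> L"
    unfolding L_def by (rule summable_tendsto_sum_from_one[OF summable_defect])
  ultimately show ?thesis
    unfolding defect_def c_def g_def by blast
qed

end
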